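(* Let $\alpha\ge0$, $\mu\ge0$. For every $h\in C_B^2[0,\infty)$, every $n\in\mathbb{N}$ and every $x\in[0,\infty)$, $$|T_n(h;x)-h(x)|\le(\Delta_1+\Delta_2)\|h\|_{C_B^2[0,\infty)},$$ where $\Delta_1=\dfrac{2\alpha x^2}{n}$ and $\Delta_2=\dfrac{1}{n^2}x\left(4x^3\alpha^2+4\alpha x+n\right)+\dfrac{2\mu x}{n}\dfrac{e_\mu(-nx)}{e_\mu(nx)}$.
   Context: $C_B[0,\infty)$ denotes the space of uniformly continuous bounded functions on $[0,\infty)$ with the sup norm $\|\cdot\|_{C_B[0,\infty)}$; $C_B^2[0,\infty)=\{g\in C_B[0,\infty): g',g''\in C_B[0,\infty)\}$ with norm $\|g\|_{C_B^2[0,\infty)}=\|g\|_{C_B}+\|g'\|_{C_B}+\|g''\|_{C_B}$. For $\mu>-\tfrac12$ define $\gamma_\mu(2k)=\dfrac{2^{2k}k!\,\Gamma(k+\mu+1/2)}{\Gamma(\mu+1/2)}$ and $\gamma_\mu(2k+1)=\dfrac{2^{2k+1}k!\,\Gamma(k+\mu+3/2)}{\Gamma(\mu+1/2)}$, $k\ge0$; $e_\mu(x)=\sum_{k\ge0} x^k/\gamma_\mu(k)$; $\theta_k=0$ if $k$ is even and $\theta_k=1$ if $k$ is odd. Let $h_k^\mu(\xi,\alpha)=\gamma_\mu(k)\sum_{j=0}^{\lfloor k/2\rfloor}\dfrac{\alpha^j\xi^{k-2j}}{j!\,\gamma_\mu(k-2j)}$. For $\alpha\ge0,\mu\ge0$,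 $n\in\mathbb{N}$ and $x\in[0,\infty)$ define $$T_n(f;x)=\frac{1}{e^{\alpha x^2}e_\mu(nx)}\sum_{k=0}^\infty \frac{h_k^\mu(n,\alpha)}{\gamma_\mu(k)}x^k f\!\left(\frac{k+2\mu\theta_k}{n}\right).$$ *)

theory Defs
  imports "HOL-Analysis.Analysis"
begin

definition gamma_mu :: "real \<Rightarrow> nat \<Rightarrow> real" where
  "gamma_mu \<mu> k =
     (if even k then 2 ^ k * fact (k div 2) * Gamma (real (k div 2) + \<mu> + 1/2) / Gamma (\<mu> + 1/2)
      else 2 ^ k * fact (k div 2) * Gamma (real (k div 2) + \<mu> + 3/2) / Gamma (\<mu> + 1/2))"

definition e_mu :: "real \<Rightarrow> real \<Rightarrow> real" where
  "e_mu \<mu> x = (\<Sum>k. x ^ k / gamma_mu \<mu> k)"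

definition theta :: "nat \<Rightarrow> real" where
  "theta k = (if even k then 0 else 1)"

definition hk :: "real \<Rightarrow> nat \<Rightarrow> real \<Rightarrow> real \<Rightarrow> real" where
  "hk \<mu> k \<xi> \<alpha> = gamma_mu \<mu> k *
     (\<Sum>j = 0..k div 2. \<alpha> ^ j * \<xi> ^ (k - 2 * j) / (fact j * gamma_mu \<mu> (k - 2 * j)))"

definition T_op :: "real \<Rightarrow> real \<Rightarrow> nat \<Rightarrow> (real \<Rightarrow> real) \<Rightarrow> real \<Rightarrow> real" where
  "T_op \<alpha> \<mu> n f x =
     1 / (exp (\<alpha> * x\<^sup>2) * e_mu \<mu> (real n * x)) *
     (\<Sum>k. hk \<mu> k (real n) \<alpha> / gamma_mu \<mu> k * x ^ k * f ((real k + 2 * \<mu> * theta k) / real n))"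

definition CB :: "(real \<Rightarrow> real) \<Rightarrow> bool" where
  "CB g \<longleftrightarrow> uniformly_continuous_on {0..} g \<and> bounded (g ` {0..})"

definition sup_norm :: "(real \<Rightarrow> real) \<Rightarrow> real" where
  "sup_norm g = (SUP x\<in>{0..}. \<bar>g x\<bar>)"

definition CB2 :: "(real \<Rightarrow> real) \<Rightarrow> (real \<Rightarrow> real) \<Rightarrow> (real \<Rightarrow> real) \<Rightarrow> bool" where
  "CB2 g g1 g2 \<longleftrightarrow> CB g \<and> CB g1 \<and> CB g2 \<and>
     (\<forall>x\<ge>0. (g has_real_derivative g1 x) (at x within {0..})) \<and>
     (\<forall>x\<ge>0. (g1 has_real_derivative g2 x) (at x within {0..}))"

definition CB2_norm :: "(real \<Rightarrow> real) \<Rightarrow> (real \<Rightarrow> real) \<Rightarrow> (real \<Rightarrow> real) \<Rightarrow> real" where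
  "CB2_norm g g1 g2 = sup_norm g + sup_norm g1 + sup_norm g2"

end

theory Submission
  imports Defs
begin

text \<open>
  \<open>T\<^sub>n(h; x)\<close> is a weighted mean of the values \<open>h(d\<^sub>k / n)\<close>, \<open>d\<^sub>k = k + 2\<mu>\<theta>\<^sub>k\<close>, with nonnegative
  weights: the \<open>k\<close>-th weight is the \<open>k\<close>-th coefficient of the Cauchy product of the series of
  \<open>exp (\<alpha>x\<^sup>2)\<close>, spread over the even indices, with the series of \<open>e\<^sub>\<mu>(nx)\<close>.
  Since \<open>\<gamma>\<^sub>\<mu>(k+1) = d\<^sub>k\<^sub>+\<^sub>1 \<gamma>\<^sub>\<mu>(k)\<close>, multiplying the terms of \<open>e\<^sub>\<mu>\<close> by \<open>d\<^sub>k\<close> shifts them, so the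
  first two moments of the weights have closed forms, and after normalisation the first and
  second central moments of the nodes are \<open>\<Delta>\<^sub>1\<close> and \<open>\<Delta>\<^sub>2\<close>. Summing the Taylor bound
  \<open>|h t - h x - h' x (t - x)| \<le> \<parallel>h''\<parallel> (t - x)\<^sup>2\<close> against the weights gives the estimate.
\<close>

definition shifted_index :: "real \<Rightarrow> nat \<Rightarrow> real" where
  "shifted_index \<mu> k = real k + 2 * \<mu> * theta k"

lemma shifted_index_0 [simp]: "shifted_index \<mu> 0 = 0"
  by (simp add: shifted_index_def theta_def)

lemma shifted_index_Suc: "shifted_index \<mu> (Suc k) = shifted_index \<mu> k + 1 + 2 * \<mu> * (-1) ^ k"
  by (cases "even k") (simp_all add: shifted_index_def theta_def)

lemma shifted_index_ge: "\<mu> \<ge> 0 \<Longrightarrow> shifted_index \<mu> k \<ge> real k"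
  by (simp add: shifted_index_def theta_def)

lemma shifted_index_nonneg: "\<mu> \<ge> 0 \<Longrightarrow> shifted_index \<mu> k \<ge> 0"
  by (simp add: shifted_index_def theta_def)

lemma shifted_index_add_even:
  assumes "i \<le> k" "even i"
  shows "shifted_index \<mu> k = real i + shifted_index \<mu> (k - i)"
proof -
  have "even (k - i) = even k" using assms by auto
  then show ?thesis using assms by (simp add: shifted_index_def theta_def)
qed

lemma gamma_mu_pos:
  assumes "\<mu> \<ge> 0"
  shows "gamma_mu \<mu> k > 0"
proof -
  have "Gamma (\<mu> + 1/2) > 0" "Gamma (real (k div 2) + \<mu> + 1/2) > 0"
    "Gamma (real (k div 2) + \<mu> + 3/2) > 0"
    using assms by (auto intro!: Gamma_real_pos)
  then show ?thesis by (auto simp: gamma_mu_def intro!: divide_pos_pos mult_pos_pos)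
qed

lemma gamma_mu_0:
  assumes "\<mu> \<ge> 0"
  shows "gamma_mu \<mu> 0 = 1"
proof -
  have "Gamma (\<mu> + 1/2) > 0" using assms by auto
  then show ?thesis by (simp add: gamma_mu_def)
qed

lemma gamma_mu_Suc:
  assumes "\<mu> \<ge> 0"
  shows "gamma_mu \<mu> (Suc k) = shifted_index \<mu> (Suc k) * gamma_mu \<mu> k"
proof -
  define m where "m = k div 2"
  have G0: "Gamma (\<mu> + 1/2) > 0" using assms by auto
  have "real m + \<mu> + 1/2 \<notin> \<int>\<^sub>\<le>\<^sub>0" using assms by (auto dest: nonpos_Ints_nonpos)
  from Gamma_plus1[OF this]
  have rec: "Gamma (real m + \<mu> + 3/2) = (real m + \<mu> + 1/2) * Gamma (real m + \<mu> + 1/2)"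
    by (simp add: add_ac)
  show ?thesis
  proof (cases "even k")
    case True
    then have "k = 2 * m" by (simp add: m_def)
    then have l: "gamma_mu \<mu> (Suc k) = 2 ^ (2*m+1) * fact m * Gamma (real m + \<mu> + 3/2) / Gamma (\<mu> + 1/2)"
      and r: "gamma_mu \<mu> k = 2 ^ (2*m) * fact m * Gamma (real m + \<mu> + 1/2) / Gamma (\<mu> + 1/2)"
      and d: "shifted_index \<mu> (Suc k) = 2 * (real m + \<mu> + 1/2)"
      by (simp_all add: gamma_mu_def shifted_index_def theta_def)
    show ?thesis using G0 unfolding l r d rec by (simp add: field_simps)
  next
    case False
    then have k: "k = 2 * m + 1" by (simp add: m_def)
    have "Gamma (real (Suc m) + \<mu> + 1/2) = Gamma (real m + \<mu> + 3/2)"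
      by (simp add: add_ac)
    with k have l: "gamma_mu \<mu> (Suc k) = 2 ^ (2*m+2) * fact (Suc m) * Gamma (real m + \<mu> + 3/2) / Gamma (\<mu> + 1/2)"
      and r: "gamma_mu \<mu> k = 2 ^ (2*m+1) * fact m * Gamma (real m + \<mu> + 3/2) / Gamma (\<mu> + 1/2)"
      and d: "shifted_index \<mu> (Suc k) = 2 * real m + 2"
      by (simp_all add: gamma_mu_def shifted_index_def theta_def)
    show ?thesis using G0 unfolding l r d by (simp add: field_simps)
  qed
qed

lemma gamma_mu_ge_fact:
  assumes "\<mu> \<ge> 0"
  shows "gamma_mu \<mu> k \<ge> fact k"
proof (induction k)
  case 0
  then show ?case using gamma_mu_0[OF assms] by simp
next
  case (Suc k)
  have "fact (Suc k) = real (Suc k) * fact k" by simp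
  also have "\<dots> \<le> shifted_index \<mu> (Suc k) * gamma_mu \<mu> k"
    by (rule mult_mono) (use Suc shifted_index_ge[OF assms, of "Suc k"] in auto)
  finally show ?case using gamma_mu_Suc[OF assms] by simp
qed

definition e_mu_term :: "real \<Rightarrow> real \<Rightarrow> nat \<Rightarrow> real" where
  "e_mu_term \<mu> y m = y ^ m / gamma_mu \<mu> m"

lemma e_mu_term_nonneg: "\<mu> \<ge> 0 \<Longrightarrow> y \<ge> 0 \<Longrightarrow> e_mu_term \<mu> y m \<ge> 0"
  using gamma_mu_pos[of \<mu> m] by (simp add: e_mu_term_def)

lemma e_mu_sums:
  assumes "\<mu> \<ge> 0"
  shows "e_mu_term \<mu> y sums e_mu \<mu> y"
proof -
  have "summable (\<lambda>m. norm (e_mu_term \<mu> y m))"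
  proof (rule summable_comparison_test')
    show "summable (\<lambda>m. \<bar>y\<bar> ^ m / fact m)"
      using summable_exp[of "\<bar>y\<bar>"] by (simp add: divide_inverse_commute)
    show "norm (norm (e_mu_term \<mu> y m)) \<le> \<bar>y\<bar> ^ m / fact m" for m
    proof -
      have "norm (norm (e_mu_term \<mu> y m)) = \<bar>y\<bar> ^ m / gamma_mu \<mu> m"
        using gamma_mu_pos[OF assms, of m] by (simp add: e_mu_term_def abs_mult power_abs)
      also have "\<dots> \<le> \<bar>y\<bar> ^ m / fact m"
        using gamma_mu_ge_fact[OF assms, of m] gamma_mu_pos[OF assms, of m]
        by (intro divide_left_mono) auto
      finally show ?thesis .
    qed
  qed
  then show ?thesis
    unfolding e_mu_def e_mu_term_def[symmetric] by (rule summable_sums[OF summable_norm_cancel])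
qed

lemma e_mu_pos:
  assumes "\<mu> \<ge> 0" "y \<ge> 0"
  shows "e_mu \<mu> y > 0"
proof -
  have "0 < suminf (e_mu_term \<mu> y)"
    using e_mu_sums[OF assms(1)] e_mu_term_nonneg[OF assms] gamma_mu_0[OF assms(1)]
    by (intro suminf_pos2[where i=0]) (auto simp: sums_iff e_mu_term_def)
  then show ?thesis using e_mu_sums[OF assms(1), of y] by (simp add: sums_iff)
qed

lemma shifted_index_e_mu_term_Suc:
  assumes "\<mu> \<ge> 0"
  shows "shifted_index \<mu> (Suc m) * e_mu_term \<mu> y (Suc m) = y * e_mu_term \<mu> y m"
  using shifted_index_ge[OF assms, of "Suc m"] gamma_mu_Suc[OF assms, of m]
    gamma_mu_pos[OF assms, of m]
  by (simp add: e_mu_term_def field_simps)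

lemma e_mu_sums_moment1:
  assumes "\<mu> \<ge> 0"
  shows "(\<lambda>m. shifted_index \<mu> m * e_mu_term \<mu> y m) sums (y * e_mu \<mu> y)"
proof -
  have "(\<lambda>m. shifted_index \<mu> (Suc m) * e_mu_term \<mu> y (Suc m)) sums (y * e_mu \<mu> y)"
    unfolding shifted_index_e_mu_term_Suc[OF assms] by (intro sums_mult e_mu_sums assms)
  then show ?thesis by (subst (asm) sums_Suc_iff) simp
qed

text \<open>The factor \<open>(-1)\<^sup>m\<close> in \<open>d\<^sub>m\<^sub>+\<^sub>1 - d\<^sub>m\<close> is what brings in \<open>e\<^sub>\<mu>(-y)\<close>.\<close>

lemma e_mu_sums_moment2:
  assumes "\<mu> \<ge> 0"
  shows "(\<lambda>m. (shifted_index \<mu> m)\<^sup>2 * e_mu_term \<mu> y m) sums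
     (y * (y * e_mu \<mu> y + e_mu \<mu> y + 2 * \<mu> * e_mu \<mu> (-y)))"
proof -
  have "(shifted_index \<mu> (Suc m))\<^sup>2 * e_mu_term \<mu> y (Suc m) =
     y * (shifted_index \<mu> m * e_mu_term \<mu> y m + e_mu_term \<mu> y m
          + 2 * \<mu> * e_mu_term \<mu> (-y) m)" for m
  proof -
    have "(shifted_index \<mu> (Suc m))\<^sup>2 * e_mu_term \<mu> y (Suc m) =
        shifted_index \<mu> (Suc m) * (y * e_mu_term \<mu> y m)"
      using shifted_index_e_mu_term_Suc[OF assms, of m y] by (simp only: power2_eq_square mult.assoc)
    then show ?thesis
      unfolding shifted_index_Suc e_mu_term_def power_minus[of y]
      by (simp add: algebra_simps add_divide_distrib)
  qed
  then have "(\<lambda>m. (shifted_index \<mu> (Suc m))\<^sup>2 * e_mu_term \<mu> y (Suc m)) sums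
     (y * (y * e_mu \<mu> y + e_mu \<mu> y + 2 * \<mu> * e_mu \<mu> (-y)))"
    by (simp only:) (intro sums_mult sums_add e_mu_sums_moment1 e_mu_sums assms)
  then show ?thesis by (subst (asm) sums_Suc_iff) simp
qed

lemma exp_sums: "(\<lambda>j. a ^ j / fact j) sums exp (a::real)"
  using exp_converges[of a] by (simp add: divide_inverse_commute)

lemma exp_sums_moment1: "(\<lambda>j. real j * (a ^ j / fact j)) sums (a * exp (a::real))"
proof -
  have "real (Suc j) * (a ^ Suc j / fact (Suc j)) = a * (a ^ j / fact j)" for j
  proof -
    have "0 < (fact j::real) + fact j * real j" by (simp add: add_pos_nonneg)
    then show ?thesis by (simp add: field_simps)
  qed
  then have "(\<lambda>j. real (Suc j) * (a ^ Suc j / fact (Suc j))) sums (a * exp a)"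
    using sums_mult[OF exp_sums, of a] by simp
  then show ?thesis by (subst (asm) sums_Suc_iff) simp
qed

lemma exp_sums_moment2: "(\<lambda>j. (real j)\<^sup>2 * (a ^ j / fact j)) sums (a * (a * exp (a::real) + exp a))"
proof -
  have "(real (Suc j))\<^sup>2 * (a ^ Suc j / fact (Suc j)) = a * (real j * (a ^ j / fact j) + a ^ j / fact j)" for j
  proof -
    have "0 < (fact j::real) + fact j * real j" by (simp add: add_pos_nonneg)
    then show ?thesis by (simp add: field_simps power2_eq_square)
  qed
  then have "(\<lambda>j. (real (Suc j))\<^sup>2 * (a ^ Suc j / fact (Suc j))) sums (a * (a * exp a + exp a))"
    using sums_mult[OF sums_add[OF exp_sums_moment1 exp_sums], of a] by simp
  then show ?thesis by (subst (asm) sums_Suc_iff) simp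
qed

lemma sums_even_index:
  assumes "(\<lambda>j. f (2 * j)) sums s" "\<And>i. odd i \<Longrightarrow> f i = 0"
  shows "f sums s"
proof -
  have "strict_mono (\<lambda>j::nat. 2 * j)" by (rule strict_monoI) simp
  moreover have "f i = 0" if "i \<notin> range (\<lambda>j::nat. 2 * j)" for i
    using that assms(2) by (metis evenE rangeI)
  ultimately show ?thesis using sums_mono_reindex assms(1) by blast
qed

definition even_exp_term :: "real \<Rightarrow> nat \<Rightarrow> real" where
  "even_exp_term a i = (if even i then a ^ (i div 2) / fact (i div 2) else 0)"

lemma even_exp_term_nonneg: "a \<ge> 0 \<Longrightarrow> even_exp_term a i \<ge> 0"
  by (simp add: even_exp_term_def)

lemma even_exp_sums: "even_exp_term a sums exp a"
  by (rule sums_even_index) (auto simp: even_exp_term_def exp_sums)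

lemma even_exp_sums_moment1: "(\<lambda>i. real i * even_exp_term a i) sums (2 * a * exp a)"
proof (rule sums_even_index)
  show "(\<lambda>j. real (2 * j) * even_exp_term a (2 * j)) sums (2 * a * exp a)"
    using sums_mult[OF exp_sums_moment1, of 2] by (simp add: even_exp_term_def mult_ac)
qed (simp add: even_exp_term_def)

lemma even_exp_sums_moment2: "(\<lambda>i. (real i)\<^sup>2 * even_exp_term a i) sums (4 * (a * (a * exp a + exp a)))"
proof (rule sums_even_index)
  show "(\<lambda>j. (real (2 * j))\<^sup>2 * even_exp_term a (2 * j)) sums (4 * (a * (a * exp a + exp a)))"
    using sums_mult[OF exp_sums_moment2, of 4]
    by (simp add: even_exp_term_def mult_ac power2_eq_square)
qed (simp add: even_exp_term_def)

lemma sums_Cauchy_product_nonneg: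
  fixes f g :: "nat \<Rightarrow> real"
  assumes "f sums s" "g sums t" "\<And>i. f i \<ge> 0" "\<And>i. g i \<ge> 0"
  shows "(\<lambda>k. \<Sum>i\<le>k. f i * g (k - i)) sums (s * t)"
proof -
  have "summable (\<lambda>k. norm (f k))" "summable (\<lambda>k. norm (g k))"
    using assms by (auto simp: sums_iff)
  from Cauchy_product_sums[OF this] show ?thesis using assms by (simp add: sums_iff)
qed

definition T_weight :: "real \<Rightarrow> real \<Rightarrow> real \<Rightarrow> nat \<Rightarrow> real" where
  "T_weight \<mu> a y k = (\<Sum>i\<le>k. even_exp_term a i * e_mu_term \<mu> y (k - i))"

lemma T_weight_nonneg: "\<mu> \<ge> 0 \<Longrightarrow> y \<ge> 0 \<Longrightarrow> a \<ge> 0 \<Longrightarrow> T_weight \<mu> a y k \<ge> 0"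
  unfolding T_weight_def by (intro sum_nonneg mult_nonneg_nonneg even_exp_term_nonneg e_mu_term_nonneg)

lemma T_weight_sums:
  assumes "\<mu> \<ge> 0" "y \<ge> 0" "a \<ge> 0"
  shows "T_weight \<mu> a y sums (exp a * e_mu \<mu> y)"
  unfolding T_weight_def[abs_def]
  using assms by (intro sums_Cauchy_product_nonneg even_exp_sums e_mu_sums even_exp_term_nonneg e_mu_term_nonneg)

text \<open>Only even \<open>i\<close> contribute to \<open>T_weight\<close>, and for them the shifted index splits
  additively; this turns the moments of the Cauchy product into Cauchy products of moments.\<close>

lemma T_weight_sums_moment1:
  assumes "\<mu> \<ge> 0" "y \<ge> 0" "a \<ge> 0"
  shows "(\<lambda>k. T_weight \<mu> a y k * shifted_index \<mu> k) sums
    (2 * a * exp a * e_mu \<mu> y + exp a * (y * e_mu \<mu> y))"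
proof -
  have split: "even_exp_term a i * e_mu_term \<mu> y (k - i) * shifted_index \<mu> k
      = real i * even_exp_term a i * e_mu_term \<mu> y (k - i)
        + even_exp_term a i * (shifted_index \<mu> (k - i) * e_mu_term \<mu> y (k - i))"
    if "i \<le> k" for i k
    using shifted_index_add_even[OF that, of \<mu>]
    by (cases "even i") (simp_all add: even_exp_term_def algebra_simps add_divide_distrib)
  have "T_weight \<mu> a y k * shifted_index \<mu> k
      = (\<Sum>i\<le>k. (real i * even_exp_term a i) * e_mu_term \<mu> y (k - i))
        + (\<Sum>i\<le>k. even_exp_term a i * (shifted_index \<mu> (k - i) * e_mu_term \<mu> y (k - i)))" for k
    unfolding T_weight_def sum_distrib_right sum.distrib[symmetric] by (rule sum.cong) (simp_all add: split)
  then show ?thesis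
    using assms
    by (simp only:) (intro sums_add sums_Cauchy_product_nonneg even_exp_sums even_exp_sums_moment1
        e_mu_sums e_mu_sums_moment1 even_exp_term_nonneg e_mu_term_nonneg mult_nonneg_nonneg
        shifted_index_nonneg of_nat_0_le_iff)
qed

lemma T_weight_sums_moment2:
  assumes "\<mu> \<ge> 0" "y \<ge> 0" "a \<ge> 0"
  shows "(\<lambda>k. T_weight \<mu> a y k * (shifted_index \<mu> k)\<^sup>2) sums
    (4 * (a * (a * exp a + exp a)) * e_mu \<mu> y + 2 * (2 * a * exp a * (y * e_mu \<mu> y))
     + exp a * (y * (y * e_mu \<mu> y + e_mu \<mu> y + 2 * \<mu> * e_mu \<mu> (-y))))"
proof -
  have split: "even_exp_term a i * e_mu_term \<mu> y (k - i) * (shifted_index \<mu> k)\<^sup>2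
      = (real i)\<^sup>2 * even_exp_term a i * e_mu_term \<mu> y (k - i)
        + 2 * ((real i * even_exp_term a i) * (shifted_index \<mu> (k - i) * e_mu_term \<mu> y (k - i)))
        + even_exp_term a i * ((shifted_index \<mu> (k - i))\<^sup>2 * e_mu_term \<mu> y (k - i))"
    if "i \<le> k" for i k
    using shifted_index_add_even[OF that, of \<mu>]
    by (cases "even i") (simp_all add: even_exp_term_def algebra_simps add_divide_distrib power2_eq_square)
  have "T_weight \<mu> a y k * (shifted_index \<mu> k)\<^sup>2
      = (\<Sum>i\<le>k. ((real i)\<^sup>2 * even_exp_term a i) * e_mu_term \<mu> y (k - i))
        + 2 * (\<Sum>i\<le>k. (real i * even_exp_term a i) * (shifted_index \<mu> (k - i) * e_mu_term \<mu> y (k - i)))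
        + (\<Sum>i\<le>k. even_exp_term a i * ((shifted_index \<mu> (k - i))\<^sup>2 * e_mu_term \<mu> y (k - i)))" for k
    unfolding T_weight_def sum_distrib_right sum_distrib_left sum.distrib[symmetric]
    by (rule sum.cong) (simp_all add: split)
  then show ?thesis
    using assms
    by (simp only:) (intro sums_add sums_mult sums_Cauchy_product_nonneg even_exp_sums
        even_exp_sums_moment1 even_exp_sums_moment2 e_mu_sums e_mu_sums_moment1 e_mu_sums_moment2
        even_exp_term_nonneg e_mu_term_nonneg mult_nonneg_nonneg shifted_index_nonneg
        of_nat_0_le_iff zero_le_power2)
qed

lemma T_weight_eq_even_sum:
  "T_weight \<mu> a y k = (\<Sum>j = 0..k div 2. a ^ j / fact j * e_mu_term \<mu> y (k - 2 * j))"
proof -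
  have "T_weight \<mu> a y k = (\<Sum>i\<in>(\<lambda>j. 2 * j) ` {0..k div 2}. even_exp_term a i * e_mu_term \<mu> y (k - i))"
    unfolding T_weight_def
    by (rule sum.mono_neutral_right) (auto simp: even_exp_term_def elim!: evenE)
  also have "\<dots> = (\<Sum>j = 0..k div 2. a ^ j / fact j * e_mu_term \<mu> y (k - 2 * j))"
    by (subst sum.reindex) (auto simp: inj_on_def even_exp_term_def)
  finally show ?thesis .
qed

lemma T_weight_eq_hk:
  assumes "\<mu> \<ge> 0"
  shows "hk \<mu> k \<xi> \<alpha> / gamma_mu \<mu> k * x ^ k = T_weight \<mu> (\<alpha> * x\<^sup>2) (\<xi> * x) k"
proof -
  have "x ^ k = (x\<^sup>2) ^ j * x ^ (k - 2 * j)" if "j \<le> k div 2" for j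
  proof -
    have "k = 2 * j + (k - 2 * j)" using that by auto
    then show ?thesis by (metis power_add power_mult)
  qed
  then show ?thesis
    using gamma_mu_pos[OF assms, of k]
    unfolding hk_def T_weight_eq_even_sum e_mu_term_def
    by (auto simp: sum_distrib_right power_mult_distrib intro!: sum.cong)
qed

lemma T_op_eq_weighted_mean:
  assumes "\<mu> \<ge> 0"
  shows "T_op \<alpha> \<mu> n f x =
    (\<Sum>k. T_weight \<mu> (\<alpha> * x\<^sup>2) (real n * x) k * f (shifted_index \<mu> k / real n))
      / (exp (\<alpha> * x\<^sup>2) * e_mu \<mu> (real n * x))"
  unfolding T_op_def T_weight_eq_hk[OF assms, symmetric] shifted_index_def by simp

definition Delta1 :: "real \<Rightarrow> nat \<Rightarrow> real \<Rightarrow> real" where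
  "Delta1 \<alpha> n x = 2 * \<alpha> * x\<^sup>2 / real n"

definition Delta2 :: "real \<Rightarrow> real \<Rightarrow> nat \<Rightarrow> real \<Rightarrow> real" where
  "Delta2 \<alpha> \<mu> n x = 1 / (real n)\<^sup>2 * x * (4 * x ^ 3 * \<alpha>\<^sup>2 + 4 * \<alpha> * x + real n)
     + 2 * \<mu> * x / real n * (e_mu \<mu> (- (real n * x)) / e_mu \<mu> (real n * x))"

lemma T_weight_central_moment1:
  assumes "\<alpha> \<ge> 0" "\<mu> \<ge> 0" "n > 0" "x \<ge> 0"
  shows "(\<lambda>k. T_weight \<mu> (\<alpha> * x\<^sup>2) (real n * x) k * (shifted_index \<mu> k / real n - x)) sums
    (Delta1 \<alpha> n x * (exp (\<alpha> * x\<^sup>2) * e_mu \<mu> (real n * x)))"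
proof -
  let ?c = "T_weight \<mu> (\<alpha> * x\<^sup>2) (real n * x)"
  have "(\<lambda>k. ?c k * shifted_index \<mu> k / real n - x * ?c k) sums
    ((2 * (\<alpha> * x\<^sup>2) * exp (\<alpha> * x\<^sup>2) * e_mu \<mu> (real n * x)
      + exp (\<alpha> * x\<^sup>2) * (real n * x * e_mu \<mu> (real n * x))) / real n
     - x * (exp (\<alpha> * x\<^sup>2) * e_mu \<mu> (real n * x)))"
    using assms by (intro sums_diff sums_divide sums_mult T_weight_sums_moment1 T_weight_sums) auto
  then show ?thesis using assms by (simp add: Delta1_def field_simps)
qed

lemma T_weight_central_moment2:
  assumes "\<alpha> \<ge> 0" "\<mu> \<ge> 0" "n > 0" "x \<ge> 0"
  shows "(\<lambda>k. T_weight \<mu> (\<alpha> * x\<^sup>2) (real n * x) k * (shifted_index \<mu> k / real n - x)\<^sup>2) sums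
    (Delta2 \<alpha> \<mu> n x * (exp (\<alpha> * x\<^sup>2) * e_mu \<mu> (real n * x)))"
proof -
  let ?c = "T_weight \<mu> (\<alpha> * x\<^sup>2) (real n * x)"
  define a where "a = \<alpha> * x\<^sup>2"
  define y where "y = real n * x"
  define S1 where "S1 = 2 * a * exp a * e_mu \<mu> y + exp a * (y * e_mu \<mu> y)"
  define S2 where "S2 = 4 * (a * (a * exp a + exp a)) * e_mu \<mu> y + 2 * (2 * a * exp a * (y * e_mu \<mu> y))
      + exp a * (y * (y * e_mu \<mu> y + e_mu \<mu> y + 2 * \<mu> * e_mu \<mu> (-y)))"
  have "(\<lambda>k. ?c k * (shifted_index \<mu> k)\<^sup>2 / (real n)\<^sup>2
      - 2 * x * (?c k * shifted_index \<mu> k / real n) + x\<^sup>2 * ?c k) sums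
    (S2 / (real n)\<^sup>2 - 2 * x * (S1 / real n) + x\<^sup>2 * (exp a * e_mu \<mu> y))"
    using assms unfolding a_def y_def S1_def S2_def
    by (intro sums_add sums_diff sums_divide sums_mult T_weight_sums_moment2 T_weight_sums_moment1
        T_weight_sums) auto
  moreover have "?c k * (shifted_index \<mu> k / real n - x)\<^sup>2
      = ?c k * (shifted_index \<mu> k)\<^sup>2 / (real n)\<^sup>2 - 2 * x * (?c k * shifted_index \<mu> k / real n)
        + x\<^sup>2 * ?c k" for k
    using assms by (simp add: field_simps power2_eq_square)
  moreover have "S2 / (real n)\<^sup>2 - 2 * x * (S1 / real n) + x\<^sup>2 * (exp a * e_mu \<mu> y)
      = (1 / (real n)\<^sup>2 * x * (4 * x ^ 3 * \<alpha>\<^sup>2 + 4 * \<alpha> * x + real n)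
         + 2 * \<mu> * x / real n * (e_mu \<mu> (- y) / e_mu \<mu> y)) * (exp a * e_mu \<mu> y)"
    using assms e_mu_pos[OF assms(2), of y]
    by (simp add: S1_def S2_def a_def y_def field_simps power2_eq_square power3_eq_cube)
  ultimately show ?thesis by (simp add: Delta2_def a_def y_def)
qed

lemma taylor_remainder_bound:
  fixes f f' :: "real \<Rightarrow> real"
  assumes "convex S" "x \<in> S" "s \<in> S"
    and deriv: "\<And>u. u \<in> S \<Longrightarrow> (f has_real_derivative f' u) (at u within S)"
    and lipschitz: "\<And>u. u \<in> S \<Longrightarrow> \<bar>f' u - f' x\<bar> \<le> M * \<bar>u - x\<bar>"
    and "M \<ge> 0"
  shows "\<bar>f s - f x - f' x * (s - x)\<bar> \<le> M * (s - x)\<^sup>2"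
proof -
  let ?I = "closed_segment x s"
  have I: "?I \<subseteq> S" using assms(1-3) by (rule closed_segment_subset[rotated -1])
  have "norm ((f s - f' x * s) - (f x - f' x * x)) \<le> M * \<bar>s - x\<bar> * norm (s - x)"
  proof (rule field_differentiable_bound[of ?I "\<lambda>u. f u - f' x * u" "\<lambda>u. f' u - f' x"])
    fix u assume u: "u \<in> ?I"
    have "((\<lambda>u. f u - f' x * u) has_real_derivative f' u - f' x * 1) (at u within S)"
      using u I by (intro DERIV_diff DERIV_cmult deriv DERIV_ident) auto
    then show "((\<lambda>u. f u - f' x * u) has_field_derivative f' u - f' x) (at u within ?I)"
      using has_field_derivative_subset[OF _ I] by simp
    have "\<bar>u - x\<bar> \<le> \<bar>s - x\<bar>"
      using dist_in_closed_segment[OF u] by (simp add: dist_real_def abs_minus_commute)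
    then show "norm (f' u - f' x) \<le> M * \<bar>s - x\<bar>"
      using lipschitz[of u] u I \<open>M \<ge> 0\<close> by (auto intro: order_trans mult_left_mono)
  qed auto
  then show ?thesis by (simp add: algebra_simps power2_eq_square)
qed

lemma abs_le_sup_norm:
  assumes "CB g" "u \<ge> 0"
  shows "\<bar>g u\<bar> \<le> sup_norm g"
proof -
  obtain B where "\<And>v. v \<in> {0..} \<Longrightarrow> \<bar>g v\<bar> \<le> B"
    using assms(1) by (auto simp: CB_def bounded_iff)
  then have "bdd_above ((\<lambda>v. \<bar>g v\<bar>) ` {0..})" by (intro bdd_aboveI2) auto
  then show ?thesis unfolding sup_norm_def using assms(2) by (intro cSUP_upper) auto
qed

lemma sup_norm_nonneg: "CB g \<Longrightarrow> sup_norm g \<ge> 0"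
  using abs_le_sup_norm[of g 0] by linarith

lemma CB2_taylor_bound:
  assumes "CB2 h h1 h2" "s \<ge> 0" "x \<ge> 0"
  shows "\<bar>h s - h x - h1 x * (s - x)\<bar> \<le> sup_norm h2 * (s - x)\<^sup>2"
proof -
  have h2: "CB h2" using assms(1) by (simp add: CB2_def)
  have deriv: "(h has_real_derivative h1 u) (at u within {0..})" if "u \<in> {0..}" for u
    using assms(1) that by (simp add: CB2_def)
  have lipschitz: "\<bar>h1 u - h1 x\<bar> \<le> sup_norm h2 * \<bar>u - x\<bar>" if "u \<in> {0..}" for u
  proof -
    have "norm (h1 u - h1 x) \<le> sup_norm h2 * norm (u - x)"
    proof (rule field_differentiable_bound[of "{0..}"])
      fix z :: real assume "z \<in> {0..}"
      then show "(h1 has_field_derivative h2 z) (at z within {0..})" "norm (h2 z) \<le> sup_norm h2"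
        using assms(1) abs_le_sup_norm[OF h2, of z] by (auto simp: CB2_def)
    qed (use that assms in auto)
    then show ?thesis by simp
  qed
  show ?thesis
    by (rule taylor_remainder_bound[OF _ _ _ deriv lipschitz sup_norm_nonneg[OF h2]])
       (use assms in auto)
qed

lemma weighted_mean_taylor_estimate:
  fixes c t :: "nat \<Rightarrow> real" and g :: "real \<Rightarrow> real"
  assumes c_nonneg: "\<And>k. c k \<ge> 0" and c_sums: "c sums E" and "E > 0"
    and moment1: "(\<lambda>k. c k * (t k - x)) sums (\<Delta>\<^sub>1 * E)"
    and moment2: "(\<lambda>k. c k * (t k - x)\<^sup>2) sums (\<Delta>\<^sub>2 * E)"
    and bounded: "\<And>k. \<bar>g (t k)\<bar> \<le> B"
    and taylor: "\<And>k. \<bar>g (t k) - g x - g' * (t k - x)\<bar> \<le> M * (t k - x)\<^sup>2"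
  shows "\<bar>(\<Sum>k. c k * g (t k)) / E - g x\<bar> \<le> \<bar>g'\<bar> * \<bar>\<Delta>\<^sub>1\<bar> + M * \<Delta>\<^sub>2"
proof -
  have "summable (\<lambda>k. c k * g (t k))"
  proof (rule summable_comparison_test')
    show "summable (\<lambda>k. c k * B)" using c_sums by (intro summable_mult2) (simp add: sums_iff)
    show "norm (c k * g (t k)) \<le> c k * B" for k
      using mult_left_mono[OF bounded c_nonneg] c_nonneg[of k] by (simp add: abs_mult)
  qed
  then have U: "(\<lambda>k. c k * g (t k)) sums (\<Sum>k. c k * g (t k))" by (rule summable_sums)
  define R where "R = (\<Sum>k. c k * g (t k)) - g x * E - g' * (\<Delta>\<^sub>1 * E)"
  have R: "(\<lambda>k. c k * (g (t k) - g x - g' * (t k - x))) sums R"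
    unfolding R_def using sums_diff[OF sums_diff[OF U sums_mult[OF c_sums, of "g x"]] sums_mult[OF moment1, of g']]
    by (simp add: algebra_simps)
  have bound: "norm (c k * (g (t k) - g x - g' * (t k - x))) \<le> M * (c k * (t k - x)\<^sup>2)" for k
    using mult_left_mono[OF taylor c_nonneg] c_nonneg[of k] by (simp add: abs_mult mult_ac)
  have "\<bar>R\<bar> \<le> M * (\<Delta>\<^sub>2 * E)"
    using norm_suminf_le[of "\<lambda>k. c k * (g (t k) - g x - g' * (t k - x))", OF bound]
      R sums_mult[OF moment2, of M]
    by (simp add: sums_iff)
  then have "\<bar>R\<bar> / E \<le> M * \<Delta>\<^sub>2"
    using \<open>E > 0\<close> by (simp add: pos_divide_le_eq mult_ac)
  moreover have "(\<Sum>k. c k * g (t k)) / E - g x = g' * \<Delta>\<^sub>1 + R / E"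
    using \<open>E > 0\<close> by (simp add: R_def field_simps)
  ultimately show ?thesis
    using abs_triangle_ineq[of "g' * \<Delta>\<^sub>1" "R / E"] \<open>E > 0\<close> by (simp add: abs_mult)
qed

lemma Delta2_nonneg:
  assumes "\<alpha> \<ge> 0" "\<mu> \<ge> 0" "n > 0" "x \<ge> 0"
  shows "Delta2 \<alpha> \<mu> n x \<ge> 0"
proof -
  have "Delta2 \<alpha> \<mu> n x * (exp (\<alpha> * x\<^sup>2) * e_mu \<mu> (real n * x)) \<ge> 0"
    using assms by (intro sums_le[OF _ sums_zero T_weight_central_moment2] mult_nonneg_nonneg
        T_weight_nonneg) auto
  moreover have "exp (\<alpha> * x\<^sup>2) * e_mu \<mu> (real n * x) > 0"
    using assms by (simp add: e_mu_pos)
  ultimately show ?thesis by (simp add: zero_le_mult_iff)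
qed

lemma T_op_taylor_estimate:
  assumes "\<alpha> \<ge> 0" "\<mu> \<ge> 0" "n > 0" "x \<ge> 0" "CB2 h h1 h2"
  shows "\<bar>T_op \<alpha> \<mu> n h x - h x\<bar> \<le> \<bar>h1 x\<bar> * Delta1 \<alpha> n x + sup_norm h2 * Delta2 \<alpha> \<mu> n x"
proof -
  have "CB h" using assms(5) by (simp add: CB2_def)
  have "\<bar>T_op \<alpha> \<mu> n h x - h x\<bar> \<le> \<bar>h1 x\<bar> * \<bar>Delta1 \<alpha> n x\<bar> + sup_norm h2 * Delta2 \<alpha> \<mu> n x"
    unfolding T_op_eq_weighted_mean[OF assms(2)]
  proof (rule weighted_mean_taylor_estimate[OF _ T_weight_sums _ T_weight_central_moment1
        T_weight_central_moment2])
    fix k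
    let ?t = "shifted_index \<mu> k / real n"
    show "T_weight \<mu> (\<alpha> * x\<^sup>2) (real n * x) k \<ge> 0" "\<bar>h ?t\<bar> \<le> sup_norm h"
      "\<bar>h ?t - h x - h1 x * (?t - x)\<bar> \<le> sup_norm h2 * (?t - x)\<^sup>2"
      using assms shifted_index_nonneg[OF assms(2), of k]
      by (auto intro!: T_weight_nonneg abs_le_sup_norm[OF \<open>CB h\<close>] CB2_taylor_bound)
  qed (use assms e_mu_pos in auto)
  then show ?thesis using assms by (simp add: Delta1_def)
qed

theorem lemma8:
  fixes \<alpha> \<mu> x :: real and n :: nat and h h1 h2 :: "real \<Rightarrow> real"
  assumes "\<alpha> \<ge> 0" "\<mu> \<ge> 0" "n \<ge> 1" "x \<ge> 0"
    and "CB2 h h1 h2"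
  shows "\<bar>T_op \<alpha> \<mu> n h x - h x\<bar> \<le>
    (2 * \<alpha> * x\<^sup>2 / real n
     + (1 / (real n)\<^sup>2 * x * (4 * x ^ 3 * \<alpha>\<^sup>2 + 4 * \<alpha> * x + real n)
        + 2 * \<mu> * x / real n * (e_mu \<mu> (- (real n * x)) / e_mu \<mu> (real n * x))))
    * CB2_norm h h1 h2"
proof -
  have n: "n > 0" using assms(3) by simp
  have CB: "CB h" "CB h1" "CB h2" using assms(5) by (auto simp: CB2_def)
  have M: "sup_norm h \<ge> 0" "sup_norm h1 \<ge> 0" "sup_norm h2 \<ge> 0"
    using CB by (auto intro: sup_norm_nonneg)
  have \<Delta>: "Delta1 \<alpha> n x \<ge> 0" "Delta2 \<alpha> \<mu> n x \<ge> 0"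
    using assms Delta2_nonneg[OF assms(1,2) n assms(4)] by (simp_all add: Delta1_def)
  have "\<bar>T_op \<alpha> \<mu> n h x - h x\<bar> \<le> \<bar>h1 x\<bar> * Delta1 \<alpha> n x + sup_norm h2 * Delta2 \<alpha> \<mu> n x"
    using T_op_taylor_estimate[OF assms(1,2) n assms(4,5)] .
  also have "\<dots> \<le> sup_norm h1 * Delta1 \<alpha> n x + sup_norm h2 * Delta2 \<alpha> \<mu> n x"
    by (intro add_right_mono mult_right_mono abs_le_sup_norm[OF CB(2) assms(4)] \<Delta>(1))
  also have "\<dots> \<le> (Delta1 \<alpha> n x + Delta2 \<alpha> \<mu> n x) * CB2_norm h h1 h2"
    using M \<Delta> unfolding CB2_norm_def
    by (simp add: distrib_left distrib_right add_increasing mult_nonneg_nonneg)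
  finally show ?thesis unfolding Delta1_def Delta2_def .
qed

end
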